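(* Let $\mu$ be a probability distribution on $(E,\mathscr{E})$ and $Q$ an isometric involution of $L^{2}(\mu)$ given by a Markov kernel. If the Markov operator $P$ is $(\mu,Q)$-self-adjoint then $QP$ and $PQ$ are $\mu$-self-adjoint; if $P$ is $\mu$-self-adjoint then $QP$ and $PQ$ are $(\mu,Q)$-self-adjoint. As a result a $(\mu,Q)$-self-adjoint Markov operator is always the composition of two $\mu$-self-adjoint Markov operators.
   Context: $\langle f,g\rangle_{\mu}=\int fg\,{\rm d}\mu$ on $L^{2}(\mu)$. An isometric involution is a linear operator $Q$ on $L^{2}(\mu)$ with $\langle Qf,Qg\rangle_{\mu}=\langle f,g\rangle_{\mu}$ for all $f,g$ and $Q^{2}={\rm Id}$; here $Q$ is the operator of a Markov kernel. A Markov operator $P$ on $L^{2}(\mu)$ is $\mu$-self-adjoint if $\langle Pf,g\rangle_{\mu}=\langle f,Pg\rangle_{\mu}$ for all $f,g$, and $(\mu,Q)$-self-adjoint if $\langle Pf,g\rangle_{\mu}=\langle f,QPQg\rangle_{\mu}$ for all $f,g\in L^{2}(\mu)$. *)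

theory Defs
  imports "HOL-Probability.Probability"
begin

definition markov_kernel :: "'a measure \<Rightarrow> ('a \<Rightarrow> 'a measure) \<Rightarrow> bool" where
  "markov_kernel M K \<longleftrightarrow> K \<in> M \<rightarrow>\<^sub>M prob_algebra M"

definition kop :: "('a \<Rightarrow> 'a measure) \<Rightarrow> ('a \<Rightarrow> real) \<Rightarrow> 'a \<Rightarrow> real" where
  "kop K f x = (\<integral>y. f y \<partial>(K x))"

definition L2 :: "'a measure \<Rightarrow> ('a \<Rightarrow> real) set" where
  "L2 M = {f. f \<in> borel_measurable M \<and> integrable M (\<lambda>x. (f x)^2)}"

definition inner_mu :: "'a measure \<Rightarrow> ('a \<Rightarrow> real) \<Rightarrow> ('a \<Rightarrow> real) \<Rightarrow> real" where
  "inner_mu M f g = (\<integral>x. f x * g x \<partial>M)"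

text \<open>A Markov kernel whose operator is a (well-defined) operator on L2(mu):
  it maps L2 into L2 and respects mu-a.e. equality.\<close>
definition markov_op_L2 :: "'a measure \<Rightarrow> ('a \<Rightarrow> 'a measure) \<Rightarrow> bool" where
  "markov_op_L2 M K \<longleftrightarrow> markov_kernel M K
     \<and> (\<forall>f\<in>L2 M. kop K f \<in> L2 M)
     \<and> (\<forall>f\<in>L2 M. \<forall>g\<in>L2 M. (AE x in M. f x = g x) \<longrightarrow> (AE x in M. kop K f x = kop K g x))"

definition isometric_involution :: "'a measure \<Rightarrow> ('a \<Rightarrow> 'a measure) \<Rightarrow> bool" where
  "isometric_involution M Q \<longleftrightarrow> markov_op_L2 M Q
     \<and> (\<forall>f\<in>L2 M. \<forall>g\<in>L2 M. inner_mu M (kop Q f) (kop Q g) = inner_mu M f g)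
     \<and> (\<forall>f\<in>L2 M. AE x in M. kop Q (kop Q f) x = f x)"

definition mu_self_adjoint :: "'a measure \<Rightarrow> (('a \<Rightarrow> real) \<Rightarrow> ('a \<Rightarrow> real)) \<Rightarrow> bool" where
  "mu_self_adjoint M T \<longleftrightarrow>
     (\<forall>f\<in>L2 M. \<forall>g\<in>L2 M. inner_mu M (T f) g = inner_mu M f (T g))"

definition muQ_self_adjoint :: "'a measure \<Rightarrow> ('a \<Rightarrow> 'a measure) \<Rightarrow> (('a \<Rightarrow> real) \<Rightarrow> ('a \<Rightarrow> real)) \<Rightarrow> bool" where
  "muQ_self_adjoint M Q T \<longleftrightarrow>
     (\<forall>f\<in>L2 M. \<forall>g\<in>L2 M. inner_mu M (T f) g = inner_mu M f (kop Q (T (kop Q g))))"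

end

(*
  An isometric involution Q is mu-self-adjoint, so (mu,Q)-self-adjointness of P gives
  <QPf, g> = <Pf, Qg> = <f, QPQQg> = <f, QPg>, i.e. QP is mu-self-adjoint; the other three
  claims are the same short computation.  For the factorisation P = Q (QP) up to null sets,
  QP has to be realised by a Markov kernel, namely x \<mapsto> Q x \<bind> P.  Testing the isometry of Q and
  the (mu,Q)-self-adjointness of P against indicators and the constant 1 shows that mu is
  invariant under Q and P.  Invariance makes the iterated integral of |f| finite for mu-almost
  every starting point, which is exactly what Fubini for the composite kernel needs in order to
  apply to every f in L2(mu).
*)
theory Submission
  imports Defs
begin

lemma measurable_kernel_subprob:
  assumes "K \<in> space (prob_algebra M)" and "P \<in> M \<rightarrow>\<^sub>M prob_algebra M"
  shows "P \<in> K \<rightarrow>\<^sub>M subprob_algebra M"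
proof -
  have "sets K = sets M" using assms(1) by (auto simp: space_prob_algebra)
  then show ?thesis
    using measurable_prob_algebraD[OF assms(2)] measurable_cong_sets[of K M "subprob_algebra M"] by simp
qed

lemma integral_bind_nonneg:
  assumes K: "K \<in> space (prob_algebra M)" and P: "P \<in> M \<rightarrow>\<^sub>M prob_algebra M"
    and g[measurable]: "g \<in> borel_measurable M" and nonneg: "\<And>z. 0 \<le> g z"
    and finite: "(\<integral>\<^sup>+ y. \<integral>\<^sup>+ z. ennreal (g z) \<partial>P y \<partial>K) < \<infinity>"
  shows "integrable (K \<bind> P) g"
    and "integrable K (\<lambda>y. integral\<^sup>L (P y) g)"
    and "AE y in K. integrable (P y) g"
    and "integral\<^sup>L (K \<bind> P) g = (\<integral> y. integral\<^sup>L (P y) g \<partial>K)"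
proof -
  have sets_K: "sets K = sets M" using K by (auto simp: space_prob_algebra)
  note P_K = measurable_kernel_subprob[OF K P]
  have g_bind: "g \<in> borel_measurable (K \<bind> P)"
    by (subst measurable_cong_sets[OF sets_bind'[OF K P] refl]) (rule g)
  have nn_bind: "(\<integral>\<^sup>+ z. ennreal (g z) \<partial>(K \<bind> P)) = (\<integral>\<^sup>+ y. \<integral>\<^sup>+ z. ennreal (g z) \<partial>P y \<partial>K)"
    by (rule nn_integral_bind[OF _ P_K]) simp
  show "integrable (K \<bind> P) g"
    by (rule integrableI_nonneg) (use g_bind nonneg nn_bind finite in auto)
  have inner_measurable: "(\<lambda>y. integral\<^sup>L (P y) g) \<in> borel_measurable K"
    by (rule measurable_compose[OF P_K integral_measurable_subprob_algebra[OF g]])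
  have "AE y in K. (\<integral>\<^sup>+ z. ennreal (g z) \<partial>P y) \<noteq> \<infinity>"
    using nn_integral_PInf_AE[OF measurable_compose[OF P_K nn_integral_measurable_subprob_algebra]]
      finite by auto
  then have AE_inner: "AE y in K. integrable (P y) g \<and>
      ennreal (integral\<^sup>L (P y) g) = (\<integral>\<^sup>+ z. ennreal (g z) \<partial>P y)"
  proof (rule AE_mp, intro AE_I2 impI)
    fix y assume y: "y \<in> space K" and fin_y: "(\<integral>\<^sup>+ z. ennreal (g z) \<partial>P y) \<noteq> \<infinity>"
    have "sets (P y) = sets M"
      using measurable_space[OF P] y sets_eq_imp_space_eq[OF sets_K] by (auto simp: space_prob_algebra)
    then have "g \<in> borel_measurable (P y)" using measurable_cong_sets g by blast
    then have int_y: "integrable (P y) g"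
      by (rule integrableI_nonneg) (use nonneg fin_y top.not_eq_extremum in auto)
    then show "integrable (P y) g \<and> ennreal (integral\<^sup>L (P y) g) = (\<integral>\<^sup>+ z. ennreal (g z) \<partial>P y)"
      using nn_integral_eq_integral[OF int_y] nonneg by auto
  qed
  then show "AE y in K. integrable (P y) g" by auto
  have nn_inner: "(\<integral>\<^sup>+ y. ennreal (integral\<^sup>L (P y) g) \<partial>K) = (\<integral>\<^sup>+ y. \<integral>\<^sup>+ z. ennreal (g z) \<partial>P y \<partial>K)"
    by (rule nn_integral_cong_AE) (use AE_inner in auto)
  show "integrable K (\<lambda>y. integral\<^sup>L (P y) g)"
    by (rule integrableI_nonneg) (use inner_measurable nn_inner finite nonneg in \<open>auto intro!: integral_nonneg\<close>)
  have "integral\<^sup>L (K \<bind> P) g = enn2real (\<integral>\<^sup>+ z. ennreal (g z) \<partial>(K \<bind> P))"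
    by (rule integral_eq_nn_integral) (use g_bind nonneg in auto)
  also have "\<dots> = enn2real (\<integral>\<^sup>+ y. ennreal (integral\<^sup>L (P y) g) \<partial>K)"
    using nn_bind nn_inner by simp
  also have "\<dots> = (\<integral> y. integral\<^sup>L (P y) g \<partial>K)"
    by (rule integral_eq_nn_integral[symmetric]) (use inner_measurable nonneg in \<open>auto intro!: integral_nonneg\<close>)
  finally show "integral\<^sup>L (K \<bind> P) g = (\<integral> y. integral\<^sup>L (P y) g \<partial>K)" .
qed

lemma integral_bind:
  assumes K: "K \<in> space (prob_algebra M)" and P: "P \<in> M \<rightarrow>\<^sub>M prob_algebra M"
    and f[measurable]: "f \<in> borel_measurable M"
    and finite: "(\<integral>\<^sup>+ y. \<integral>\<^sup>+ z. ennreal \<bar>f z\<bar> \<partial>P y \<partial>K) < \<infinity>"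
  shows "integral\<^sup>L (K \<bind> P) f = (\<integral> y. integral\<^sup>L (P y) f \<partial>K)"
proof -
  define fp where "fp = (\<lambda>z. max (f z) 0)"
  define fm where "fm = (\<lambda>z. max (- f z) 0)"
  have f_eq: "f = (\<lambda>z. fp z - fm z)" by (auto simp: fp_def fm_def)
  have fp_measurable: "fp \<in> borel_measurable M" and fm_measurable: "fm \<in> borel_measurable M"
    unfolding fp_def fm_def by measurable
  have fin_pos: "(\<integral>\<^sup>+ y. \<integral>\<^sup>+ z. ennreal (fp z) \<partial>P y \<partial>K) < \<infinity>"
    and fin_neg: "(\<integral>\<^sup>+ y. \<integral>\<^sup>+ z. ennreal (fm z) \<partial>P y \<partial>K) < \<infinity>"
    by (rule le_less_trans[OF _ finite], intro nn_integral_mono, simp add: fp_def fm_def ennreal_leI)+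
  have "\<And>z. 0 \<le> fp z" "\<And>z. 0 \<le> fm z" by (auto simp: fp_def fm_def)
  note pos = integral_bind_nonneg[OF K P fp_measurable this(1) fin_pos]
    and neg = integral_bind_nonneg[OF K P fm_measurable this(2) fin_neg]
  have "integral\<^sup>L (K \<bind> P) f = integral\<^sup>L (K \<bind> P) fp - integral\<^sup>L (K \<bind> P) fm"
    by (subst f_eq, rule Bochner_Integration.integral_diff[OF pos(1) neg(1)])
  also have "\<dots> = (\<integral> y. integral\<^sup>L (P y) fp - integral\<^sup>L (P y) fm \<partial>K)"
    using pos(4) neg(4) Bochner_Integration.integral_diff[OF pos(2) neg(2)] by simp
  also have "\<dots> = (\<integral> y. integral\<^sup>L (P y) f \<partial>K)"
  proof (rule integral_cong_AE)
    show "(\<lambda>y. integral\<^sup>L (P y) fp - integral\<^sup>L (P y) fm) \<in> borel_measurable K"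
      by (intro borel_measurable_diff borel_measurable_integrable pos(2) neg(2))
    show "(\<lambda>y. integral\<^sup>L (P y) f) \<in> borel_measurable K"
      by (rule measurable_compose[OF measurable_kernel_subprob[OF K P]
            integral_measurable_subprob_algebra[OF f]])
    show "AE y in K. integral\<^sup>L (P y) fp - integral\<^sup>L (P y) fm = integral\<^sup>L (P y) f"
      using pos(3) neg(3) by eventually_elim (simp add: f_eq)
  qed
  finally show ?thesis .
qed

lemma bind_kernel_eq_self:
  assumes M: "prob_space M" and K: "K \<in> M \<rightarrow>\<^sub>M prob_algebra M"
    and invariant: "\<And>A. A \<in> sets M \<Longrightarrow> (\<integral> x. measure (K x) A \<partial>M) = measure M A"
  shows "M \<bind> K = M"
proof (rule measure_eqI)
  have K_x: "\<And>x. x \<in> space M \<Longrightarrow> sets (K x) = sets M \<and> prob_space (K x)"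
    using measurable_space[OF K] by (auto simp: space_prob_algebra)
  show sets_eq: "sets (M \<bind> K) = sets M"
    by (rule sets_bind) (use K_x prob_space.not_empty[OF M] in auto)
  fix A assume "A \<in> sets (M \<bind> K)"
  then have A: "A \<in> sets M" using sets_eq by simp
  have "integrable M (\<lambda>x. measure (K x) A)"
    using M K_x prob_space.prob_le_1 measurable_compose[OF K measurable_measure_prob_algebra[OF A]]
    by (intro finite_measure.integrable_const_bound[where B=1])
      (auto simp: prob_space_def intro!: AE_I2)
  moreover have "emeasure (K x) A = ennreal (measure (K x) A)" if "x \<in> space M" for x
    using K_x[OF that] by (simp add: prob_space_def finite_measure.emeasure_eq_measure)
  ultimately have "emeasure (M \<bind> K) A = ennreal (\<integral> x. measure (K x) A \<partial>M)"
    using emeasure_bind[OF prob_space.not_empty[OF M] measurable_prob_algebraD[OF K] A]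
    by (simp add: nn_integral_eq_integral cong: nn_integral_cong)
  then show "emeasure (M \<bind> K) A = emeasure M A"
    using invariant[OF A] M by (simp add: prob_space_def finite_measure.emeasure_eq_measure)
qed

lemma kop_bind_AE:
  assumes Q: "Q \<in> M \<rightarrow>\<^sub>M prob_algebra M" and P: "P \<in> M \<rightarrow>\<^sub>M prob_algebra M"
    and Q_invariant: "M \<bind> Q = M" and P_invariant: "M \<bind> P = M"
    and f[measurable]: "f \<in> borel_measurable M" and f_integrable: "integrable M f"
  shows "AE x in M. kop (\<lambda>x. Q x \<bind> P) f x = kop Q (kop P f) x"
proof -
  define H where "H = (\<lambda>y. \<integral>\<^sup>+ z. ennreal \<bar>f z\<bar> \<partial>P y)"
  define G where "G = (\<lambda>x. \<integral>\<^sup>+ y. H y \<partial>Q x)"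
  have H_measurable: "H \<in> borel_measurable M" unfolding H_def
    by (rule measurable_compose[OF measurable_prob_algebraD[OF P] nn_integral_measurable_subprob_algebra]) simp
  have G_measurable: "G \<in> borel_measurable M" unfolding G_def
    by (rule measurable_compose[OF measurable_prob_algebraD[OF Q] nn_integral_measurable_subprob_algebra])
      (rule H_measurable)
  have "integral\<^sup>N M G = integral\<^sup>N M H"
    unfolding G_def using nn_integral_bind[OF H_measurable measurable_prob_algebraD[OF Q]] Q_invariant
    by simp
  also have "\<dots> = (\<integral>\<^sup>+ z. ennreal \<bar>f z\<bar> \<partial>M)"
    unfolding H_def using nn_integral_bind[OF _ measurable_prob_algebraD[OF P]] P_invariant
    by simp
  also have "\<dots> < \<infinity>"
    using f_integrable unfolding integrable_iff_bounded by (simp only: real_norm_def)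
  finally have "AE x in M. G x \<noteq> \<infinity>" using nn_integral_PInf_AE[OF G_measurable] by auto
  then show ?thesis
  proof (rule AE_mp, intro AE_I2 impI)
    fix x assume x: "x \<in> space M" and "G x \<noteq> \<infinity>"
    then show "kop (\<lambda>x. Q x \<bind> P) f x = kop Q (kop P f) x"
      unfolding kop_def using measurable_space[OF Q x]
      by (intro integral_bind[OF _ P f]) (auto simp: G_def H_def top.not_eq_extremum)
  qed
qed

lemma kop_borel_measurable:
  assumes "K \<in> M \<rightarrow>\<^sub>M prob_algebra M" and "f \<in> borel_measurable M"
  shows "kop K f \<in> borel_measurable M"
  unfolding kop_def
  by (rule measurable_compose[OF measurable_prob_algebraD[OF assms(1)]
        integral_measurable_subprob_algebra[OF assms(2)]])

lemma kop_const_one: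
  assumes "K \<in> M \<rightarrow>\<^sub>M prob_algebra M" and "x \<in> space M"
  shows "kop K (\<lambda>_. 1) x = 1"
  using measurable_space[OF assms]
  by (simp add: kop_def space_prob_algebra prob_space.prob_space)

lemma kop_indicator:
  assumes "K \<in> M \<rightarrow>\<^sub>M prob_algebra M" and "x \<in> space M" and "A \<in> sets M"
  shows "kop K (indicator A) x = measure (K x) A"
  using measurable_space[OF assms(1,2)] assms(3) unfolding kop_def
  by (simp add: space_prob_algebra prob_space_def finite_measure.emeasure_finite top.not_eq_extremum)

lemma L2_borel_measurable: "f \<in> L2 M \<Longrightarrow> f \<in> borel_measurable M"
  by (simp add: L2_def)

lemma L2_integrable: "finite_measure M \<Longrightarrow> f \<in> L2 M \<Longrightarrow> integrable M f"
  by (auto simp: L2_def intro: finite_measure.square_integrable_imp_integrable)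

lemma L2_AE_cong:
  assumes "g \<in> L2 M" and "f \<in> borel_measurable M" and "AE x in M. f x = g x"
  shows "f \<in> L2 M"
proof -
  have "integrable M (\<lambda>x. (f x)^2) \<longleftrightarrow> integrable M (\<lambda>x. (g x)^2)"
    using assms L2_borel_measurable[OF assms(1)] by (intro integrable_cong_AE) auto
  then show ?thesis using assms unfolding L2_def by auto
qed

lemma const_one_L2: "finite_measure M \<Longrightarrow> (\<lambda>_. 1::real) \<in> L2 M"
  by (simp add: L2_def finite_measure.integrable_const)

lemma indicator_L2:
  assumes "finite_measure M" and "A \<in> sets M"
  shows "indicator A \<in> L2 M"
proof -
  have "(\<lambda>x. (indicator A x :: real)^2) = indicator A" by (auto simp: indicator_def)
  then show ?thesis
    using assms finite_measure.emeasure_finite[of M A]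
    by (simp add: L2_def less_top[symmetric])
qed

lemma inner_mu_commute: "inner_mu M f g = inner_mu M g f"
  by (simp add: inner_mu_def mult.commute)

lemma inner_mu_cong_AE:
  assumes "f \<in> L2 M" "g \<in> L2 M" "g' \<in> L2 M" and "AE x in M. g x = g' x"
  shows "inner_mu M f g = inner_mu M f g'"
  using assms L2_borel_measurable[of _ M] unfolding inner_mu_def
  by (intro integral_cong_AE) auto

lemma inner_mu_indicator_one:
  assumes "finite_measure M" and "A \<in> sets M"
  shows "inner_mu M (indicator A) (\<lambda>_. 1) = measure M A"
  using assms by (simp add: inner_mu_def finite_measure.emeasure_finite top.not_eq_extremum)

lemma inner_mu_kop_indicator_one:
  assumes "K \<in> M \<rightarrow>\<^sub>M prob_algebra M" and "A \<in> sets M"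
  shows "inner_mu M (kop K (indicator A)) (\<lambda>_. 1) = (\<integral> x. measure (K x) A \<partial>M)"
  unfolding inner_mu_def using kop_indicator[OF assms(1) _ assms(2)]
  by (intro Bochner_Integration.integral_cong) auto

lemma mu_self_adjoint_AE_cong:
  assumes "mu_self_adjoint M T"
    and "\<And>f. f \<in> L2 M \<Longrightarrow> T f \<in> L2 M" and "\<And>f. f \<in> L2 M \<Longrightarrow> S f \<in> L2 M"
    and "\<And>f. f \<in> L2 M \<Longrightarrow> AE x in M. S f x = T f x"
  shows "mu_self_adjoint M S"
  unfolding mu_self_adjoint_def
proof (intro ballI)
  fix f g assume f: "f \<in> L2 M" and g: "g \<in> L2 M"
  have "inner_mu M (S f) g = inner_mu M g (T f)"
    using assms(2-4) f g by (subst inner_mu_commute, intro inner_mu_cong_AE) auto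
  also have "\<dots> = inner_mu M f (T g)"
    using assms(1) f g by (simp add: mu_self_adjoint_def inner_mu_commute)
  also have "\<dots> = inner_mu M f (S g)"
    using assms(2-4) f g by (intro inner_mu_cong_AE) (auto simp: eq_commute)
  finally show "inner_mu M (S f) g = inner_mu M f (S g)" .
qed

locale L2_involution_kernel =
  fixes M :: "'a measure" and Q :: "'a \<Rightarrow> 'a measure"
  assumes isometric_involution: "isometric_involution M Q"
begin

lemma Q_markov_op: "markov_op_L2 M Q"
  using isometric_involution by (simp add: isometric_involution_def)

lemma Q_kernel: "Q \<in> M \<rightarrow>\<^sub>M prob_algebra M"
  using Q_markov_op by (simp add: markov_op_L2_def markov_kernel_def)

lemma Q_L2: "f \<in> L2 M \<Longrightarrow> kop Q f \<in> L2 M"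
  using Q_markov_op by (simp add: markov_op_L2_def)

lemma Q_AE_cong:
  "f \<in> L2 M \<Longrightarrow> g \<in> L2 M \<Longrightarrow> AE x in M. f x = g x \<Longrightarrow> AE x in M. kop Q f x = kop Q g x"
  using Q_markov_op by (simp add: markov_op_L2_def)

lemma Q_Q_AE: "f \<in> L2 M \<Longrightarrow> AE x in M. kop Q (kop Q f) x = f x"
  using isometric_involution by (simp add: isometric_involution_def)

lemma inner_mu_Q_Q: "f \<in> L2 M \<Longrightarrow> g \<in> L2 M \<Longrightarrow> inner_mu M (kop Q f) (kop Q g) = inner_mu M f g"
  using isometric_involution by (simp add: isometric_involution_def)

lemma inner_mu_Q_adjoint:
  assumes "f \<in> L2 M" and "g \<in> L2 M"
  shows "inner_mu M (kop Q f) g = inner_mu M f (kop Q g)"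
proof -
  have "inner_mu M (kop Q f) g = inner_mu M (kop Q f) (kop Q (kop Q g))"
    using assms Q_Q_AE[of g] by (intro inner_mu_cong_AE) (auto simp: Q_L2 eq_commute)
  also have "\<dots> = inner_mu M f (kop Q g)"
    using assms by (simp add: Q_L2 inner_mu_Q_Q)
  finally show ?thesis .
qed

lemma Q_self_adjoint: "mu_self_adjoint M (kop Q)"
  by (simp add: mu_self_adjoint_def inner_mu_Q_adjoint)

lemma bind_Q_eq_self:
  assumes "prob_space M"
  shows "M \<bind> Q = M"
proof (rule bind_kernel_eq_self[OF assms Q_kernel])
  fix A assume A: "A \<in> sets M"
  have finite: "finite_measure M" using assms by (simp add: prob_space_def)
  have "(\<integral> x. measure (Q x) A \<partial>M) = inner_mu M (kop Q (indicator A)) (kop Q (\<lambda>_. 1))"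
    using Q_kernel A indicator_L2[OF finite A] const_one_L2[OF finite]
    by (subst inner_mu_kop_indicator_one[symmetric])
      (auto intro!: inner_mu_cong_AE AE_I2 Q_L2 simp: kop_const_one)
  also have "\<dots> = measure M A"
    using finite A by (simp add: inner_mu_Q_Q indicator_L2 const_one_L2 inner_mu_indicator_one)
  finally show "(\<integral> x. measure (Q x) A \<partial>M) = measure M A" .
qed

end

locale L2_involution_markov_op = L2_involution_kernel +
  fixes P :: "'a \<Rightarrow> 'a measure"
  assumes P_markov_op: "markov_op_L2 M P"
begin

lemma P_kernel: "P \<in> M \<rightarrow>\<^sub>M prob_algebra M"
  using P_markov_op by (simp add: markov_op_L2_def markov_kernel_def)

lemma P_L2: "f \<in> L2 M \<Longrightarrow> kop P f \<in> L2 M"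
  using P_markov_op by (simp add: markov_op_L2_def)

lemma P_AE_cong:
  "f \<in> L2 M \<Longrightarrow> g \<in> L2 M \<Longrightarrow> AE x in M. f x = g x \<Longrightarrow> AE x in M. kop P f x = kop P g x"
  using P_markov_op by (simp add: markov_op_L2_def)

lemma Q_P_Q_Q_AE:
  assumes "g \<in> L2 M"
  shows "AE x in M. kop Q (kop P (kop Q (kop Q g))) x = kop Q (kop P g) x"
  using assms by (intro Q_AE_cong P_AE_cong Q_Q_AE) (auto intro: Q_L2 P_L2)

lemma muQ_self_adjoint_imp_self_adjoint_QP:
  assumes "muQ_self_adjoint M Q (kop P)"
  shows "mu_self_adjoint M (kop Q \<circ> kop P)"
  unfolding mu_self_adjoint_def comp_apply
proof (intro ballI)
  fix f g assume f: "f \<in> L2 M" and g: "g \<in> L2 M"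
  have "inner_mu M (kop Q (kop P f)) g = inner_mu M (kop P f) (kop Q g)"
    using f g by (simp add: inner_mu_Q_adjoint P_L2)
  also have "\<dots> = inner_mu M f (kop Q (kop P (kop Q (kop Q g))))"
    using assms f g by (simp add: muQ_self_adjoint_def Q_L2)
  also have "\<dots> = inner_mu M f (kop Q (kop P g))"
    using f g Q_P_Q_Q_AE[OF g] by (intro inner_mu_cong_AE) (auto intro: Q_L2 P_L2)
  finally show "inner_mu M (kop Q (kop P f)) g = inner_mu M f (kop Q (kop P g))" .
qed

lemma muQ_self_adjoint_imp_self_adjoint_PQ:
  assumes "muQ_self_adjoint M Q (kop P)"
  shows "mu_self_adjoint M (kop P \<circ> kop Q)"
  unfolding mu_self_adjoint_def comp_apply
proof (intro ballI)
  fix f g assume f: "f \<in> L2 M" and g: "g \<in> L2 M"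
  have "inner_mu M (kop P (kop Q f)) g = inner_mu M (kop Q f) (kop Q (kop P (kop Q g)))"
    using assms f g by (simp add: muQ_self_adjoint_def Q_L2)
  also have "\<dots> = inner_mu M f (kop Q (kop Q (kop P (kop Q g))))"
    using f g by (simp add: inner_mu_Q_adjoint Q_L2 P_L2)
  also have "\<dots> = inner_mu M f (kop P (kop Q g))"
    using f g Q_Q_AE[of "kop P (kop Q g)"] by (intro inner_mu_cong_AE) (auto intro: Q_L2 P_L2)
  finally show "inner_mu M (kop P (kop Q f)) g = inner_mu M f (kop P (kop Q g))" .
qed

lemma self_adjoint_imp_muQ_self_adjoint_QP:
  assumes "mu_self_adjoint M (kop P)"
  shows "muQ_self_adjoint M Q (kop Q \<circ> kop P)"
  unfolding muQ_self_adjoint_def comp_apply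
proof (intro ballI)
  fix f g assume f: "f \<in> L2 M" and g: "g \<in> L2 M"
  have "inner_mu M (kop Q (kop P f)) g = inner_mu M (kop P f) (kop Q g)"
    using f g by (simp add: inner_mu_Q_adjoint P_L2)
  also have "\<dots> = inner_mu M f (kop P (kop Q g))"
    using assms f g by (simp add: mu_self_adjoint_def Q_L2)
  also have "\<dots> = inner_mu M f (kop Q (kop Q (kop P (kop Q g))))"
    using f g Q_Q_AE[of "kop P (kop Q g)"] by (intro inner_mu_cong_AE) (auto intro: Q_L2 P_L2 simp: eq_commute)
  finally show "inner_mu M (kop Q (kop P f)) g = inner_mu M f (kop Q (kop Q (kop P (kop Q g))))" .
qed

lemma self_adjoint_imp_muQ_self_adjoint_PQ:
  assumes "mu_self_adjoint M (kop P)"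
  shows "muQ_self_adjoint M Q (kop P \<circ> kop Q)"
  unfolding muQ_self_adjoint_def comp_apply
proof (intro ballI)
  fix f g assume f: "f \<in> L2 M" and g: "g \<in> L2 M"
  have "inner_mu M (kop P (kop Q f)) g = inner_mu M (kop Q f) (kop P g)"
    using assms f g by (simp add: mu_self_adjoint_def Q_L2)
  also have "\<dots> = inner_mu M f (kop Q (kop P g))"
    using f g by (simp add: inner_mu_Q_adjoint P_L2)
  also have "\<dots> = inner_mu M f (kop Q (kop P (kop Q (kop Q g))))"
    using f g Q_P_Q_Q_AE[OF g] by (intro inner_mu_cong_AE) (auto intro: Q_L2 P_L2 simp: eq_commute)
  finally show "inner_mu M (kop P (kop Q f)) g = inner_mu M f (kop Q (kop P (kop Q (kop Q g))))" .
qed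

context
  assumes prob_space: "prob_space M" and muQ_self_adjoint: "muQ_self_adjoint M Q (kop P)"
begin

lemma bind_P_eq_self: "M \<bind> P = M"
proof (rule bind_kernel_eq_self[OF prob_space P_kernel])
  fix A assume A: "A \<in> sets M"
  have finite: "finite_measure M" using prob_space by (simp add: prob_space_def)
  note one = const_one_L2[OF finite] and ind = indicator_L2[OF finite A]
  have Q_one: "AE x in M. kop Q (\<lambda>_. 1) x = 1" and P_one: "AE x in M. kop P (\<lambda>_. 1) x = 1"
    by (auto intro!: AE_I2 kop_const_one Q_kernel P_kernel)
  have "AE x in M. kop P (kop Q (\<lambda>_. 1)) x = 1"
    using P_AE_cong[OF Q_L2[OF one] one Q_one] P_one by eventually_elim simp
  then have "AE x in M. kop Q (kop P (kop Q (\<lambda>_. 1))) x = kop Q (\<lambda>_. 1) x"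
    by (rule Q_AE_cong[OF P_L2[OF Q_L2[OF one]] one])
  with Q_one have "AE x in M. kop Q (kop P (kop Q (\<lambda>_. 1))) x = 1"
    by eventually_elim simp
  then have "inner_mu M (indicator A) (kop Q (kop P (kop Q (\<lambda>_. 1)))) = inner_mu M (indicator A) (\<lambda>_. 1)"
    using ind one by (intro inner_mu_cong_AE) (auto intro: Q_L2 P_L2)
  then show "(\<integral> x. measure (P x) A \<partial>M) = measure M A"
    using muQ_self_adjoint ind one A finite
    by (simp add: inner_mu_kop_indicator_one[OF P_kernel, symmetric] muQ_self_adjoint_def
        inner_mu_indicator_one)
qed

lemma kop_bind_QP_AE:
  "f \<in> L2 M \<Longrightarrow> AE x in M. kop (\<lambda>x. Q x \<bind> P) f x = kop Q (kop P f) x"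
  using prob_space
  by (intro kop_bind_AE Q_kernel P_kernel bind_Q_eq_self bind_P_eq_self L2_borel_measurable
      L2_integrable) (auto simp: prob_space_def)

lemma markov_op_bind_QP: "markov_op_L2 M (\<lambda>x. Q x \<bind> P)"
  unfolding markov_op_L2_def markov_kernel_def
proof (intro conjI ballI impI)
  show kernel: "(\<lambda>x. Q x \<bind> P) \<in> M \<rightarrow>\<^sub>M prob_algebra M"
    by (rule measurable_bind_prob_space[OF Q_kernel P_kernel])
  fix f assume f: "f \<in> L2 M"
  show "kop (\<lambda>x. Q x \<bind> P) f \<in> L2 M"
    by (rule L2_AE_cong[OF Q_L2[OF P_L2[OF f]] kop_borel_measurable[OF kernel L2_borel_measurable[OF f]]
          kop_bind_QP_AE[OF f]])
  fix g assume g: "g \<in> L2 M" and "AE x in M. f x = g x"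
  then have "AE x in M. kop Q (kop P f) x = kop Q (kop P g) x"
    by (intro Q_AE_cong[OF P_L2[OF f] P_L2[OF g]] P_AE_cong[OF f g])
  then show "AE x in M. kop (\<lambda>x. Q x \<bind> P) f x = kop (\<lambda>x. Q x \<bind> P) g x"
    using kop_bind_QP_AE[OF f] kop_bind_QP_AE[OF g] by eventually_elim simp
qed

lemma muQ_self_adjoint_factorization:
  "\<exists>K1 K2. markov_op_L2 M K1 \<and> markov_op_L2 M K2
     \<and> mu_self_adjoint M (kop K1) \<and> mu_self_adjoint M (kop K2)
     \<and> (\<forall>f\<in>L2 M. AE x in M. kop P f x = kop K1 (kop K2 f) x)"
proof (rule exI[of _ Q], rule exI[of _ "\<lambda>x. Q x \<bind> P"], intro conjI ballI)
  have bind_L2: "kop (\<lambda>x. Q x \<bind> P) f \<in> L2 M" if "f \<in> L2 M" for f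
    using markov_op_bind_QP that by (simp add: markov_op_L2_def)
  show "mu_self_adjoint M (kop (\<lambda>x. Q x \<bind> P))"
    by (rule mu_self_adjoint_AE_cong[OF muQ_self_adjoint_imp_self_adjoint_QP[OF muQ_self_adjoint]])
      (auto simp: Q_L2 P_L2 bind_L2 kop_bind_QP_AE)
  fix f assume f: "f \<in> L2 M"
  have "AE x in M. kop Q (kop (\<lambda>x. Q x \<bind> P) f) x = kop Q (kop Q (kop P f)) x"
    by (rule Q_AE_cong[OF bind_L2[OF f] Q_L2[OF P_L2[OF f]] kop_bind_QP_AE[OF f]])
  then show "AE x in M. kop P f x = kop Q (kop (\<lambda>x. Q x \<bind> P) f) x"
    using Q_Q_AE[OF P_L2[OF f]] by eventually_elim simp
qed (rule Q_markov_op markov_op_bind_QP Q_self_adjoint)+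

end

end

theorem proposition2p5:
  fixes M :: "'a measure" and Q P :: "'a \<Rightarrow> 'a measure"
  assumes "prob_space M"
    and "isometric_involution M Q"
    and "markov_op_L2 M P"
  shows "(muQ_self_adjoint M Q (kop P) \<longrightarrow>
            mu_self_adjoint M (kop Q \<circ> kop P) \<and> mu_self_adjoint M (kop P \<circ> kop Q))
       \<and> (mu_self_adjoint M (kop P) \<longrightarrow>
            muQ_self_adjoint M Q (kop Q \<circ> kop P) \<and> muQ_self_adjoint M Q (kop P \<circ> kop Q))
       \<and> (muQ_self_adjoint M Q (kop P) \<longrightarrow>
            (\<exists>K1 K2. markov_op_L2 M K1 \<and> markov_op_L2 M K2
               \<and> mu_self_adjoint M (kop K1) \<and> mu_self_adjoint M (kop K2)
               \<and> (\<forall>f\<in>L2 M. AE x in M. kop P f x = kop K1 (kop K2 f) x)))"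
proof -
  interpret L2_involution_markov_op M Q P
    using assms(2,3) by unfold_locales
  show ?thesis
    using muQ_self_adjoint_imp_self_adjoint_QP muQ_self_adjoint_imp_self_adjoint_PQ
      self_adjoint_imp_muQ_self_adjoint_QP self_adjoint_imp_muQ_self_adjoint_PQ
      muQ_self_adjoint_factorization[OF assms(1)]
    by blast
qed

end
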